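(* Let $N_3(t)=\mathbb{E}[Z_3(t)]$ be the expected number of vertices of degree $3$ in a Random Apollonian Network after $t$ steps. Then for all $t\ge 1$, $$\Big|N_3(t) - \frac{2}{5} t\Big|\leq K, \quad\text{where } K=3.6.$$
   Context: A Random Apollonian Network (RAN) is generated as follows: start (at time $t=0$) with a single triangular face. At each step $t=1,2,\dots$, pick one of the current (bounded) triangular faces uniformly at random, insert a new vertex inside it, and connect it to the three vertices on the boundary of that face, subdividing the face into three new triangular faces. After $t$ steps there are $2t+1$ triangular faces. $Z_k(t)$ denotes the number of vertices of degree exactly $k$ after $t$ steps. *)

theory Defs
  imports "HOL-Probability.Probability"
begin

text \<open>A state of a Random Apollonian Network: number of vertices n (vertices are 0..n-1),
  the set of edges (2-element vertex sets) and the set of bounded triangular faces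
  (3-element vertex sets).\<close>
record ran_state =
  nverts :: nat
  edges :: "nat set set"
  faces :: "nat set set"

definition ran_init :: ran_state where
  "ran_init = \<lparr> nverts = 3, edges = {{0,1},{1,2},{0,2}}, faces = {{0,1,2}} \<rparr>"

definition ran_insert :: "ran_state \<Rightarrow> nat set \<Rightarrow> ran_state" where
  "ran_insert s F = \<lparr> nverts = Suc (nverts s),
     edges = edges s \<union> {{nverts s, x} | x. x \<in> F},
     faces = (faces s - {F}) \<union> {insert (nverts s) (F - {x}) | x. x \<in> F} \<rparr>"

definition ran_step :: "ran_state \<Rightarrow> ran_state pmf" where
  "ran_step s = map_pmf (ran_insert s) (pmf_of_set (faces s))"

fun ran :: "nat \<Rightarrow> ran_state pmf" where
  "ran 0 = return_pmf ran_init"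
| "ran (Suc t) = bind_pmf (ran t) ran_step"

definition degree :: "ran_state \<Rightarrow> nat \<Rightarrow> nat" where
  "degree s v = card {e \<in> edges s. v \<in> e}"

definition Z :: "nat \<Rightarrow> ran_state \<Rightarrow> nat" where
  "Z k s = card {v. v < nverts s \<and> degree s v = k}"

definition N3 :: "nat \<Rightarrow> real" where
  "N3 t = measure_pmf.expectation (ran t) (\<lambda>s. real (Z 3 s))"

end

theory Submission
  imports Defs
begin

text \<open>
  In a triangulation the degree of a vertex equals the number of faces at it, counting the
  unbounded face, which only the three initial vertices border; after the first step every
  vertex has degree at least 3. Inserting into a face F therefore turns the degree-3 corners of F
  into degree-4 vertices and creates exactly one new degree-3 vertex. By double counting, the
  number of pairs (face, degree-3 corner) lies between \<open>3 Z\<^sub>3 - 3\<close> and \<open>3 Z\<^sub>3\<close>, so with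
  \<open>q = 3/(2t+1)\<close> we get \<open>(1 - q) N\<^sub>3(t) + 1 \<le> N\<^sub>3(t+1) \<le> (1 - q) N\<^sub>3(t) + 1 + q\<close>.
  These affine maps send \<open>[2t/5, 2t/5 + 3.6]\<close> into \<open>[2(t+1)/5, 2(t+1)/5 + 3.6]\<close>, and \<open>N\<^sub>3(1) = 4\<close>.
\<close>

definition face_count :: "ran_state \<Rightarrow> nat \<Rightarrow> nat" where
  "face_count s v = card {F \<in> faces s. v \<in> F}"

lemma nverts_ran_insert [simp]: "nverts (ran_insert s F) = Suc (nverts s)"
  by (simp add: ran_insert_def)

lemma edges_ran_insert: "edges (ran_insert s F) = edges s \<union> (\<lambda>x. {nverts s, x}) ` F"
  by (auto simp: ran_insert_def)

lemma faces_ran_insert: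
  "faces (ran_insert s F) = (faces s - {F}) \<union> (\<lambda>x. insert (nverts s) (F - {x})) ` F"
  by (auto simp: ran_insert_def)

lemma degree_ran_insert:
  assumes edges: "finite (edges s)" "\<forall>e\<in>edges s. e \<subseteq> {..<nverts s}"
    and F: "F \<subseteq> {..<nverts s}"
  shows "v < nverts s \<Longrightarrow> degree (ran_insert s F) v = degree s v + of_bool (v \<in> F)"
    and "degree (ran_insert s F) (nverts s) = card F"
proof -
  let ?n = "nverts s"
  have fin: "finite F" using F finite_subset by blast
  have split: "{e \<in> edges (ran_insert s F). w \<in> e}
      = {e \<in> edges s. w \<in> e} \<union> {e \<in> (\<lambda>x. {?n, x}) ` F. w \<in> e}" for w
    by (auto simp: edges_ran_insert)
  have "degree (ran_insert s F) w = degree s w + card {e \<in> (\<lambda>x. {?n, x}) ` F. w \<in> e}" for w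
    unfolding degree_def split using edges fin by (subst card_Un_disjoint) auto
  moreover have "{e \<in> (\<lambda>x. {?n, x}) ` F. v \<in> e} = (if v \<in> F then {{?n, v}} else {})"
    if "v < ?n" for v
    using that F by auto
  moreover have "{e \<in> (\<lambda>x. {?n, x}) ` F. ?n \<in> e} = (\<lambda>x. {?n, x}) ` F"
    by auto
  moreover have "degree s ?n = 0"
    using edges by (auto simp: degree_def)
  moreover have "card ((\<lambda>x. {?n, x}) ` F) = card F"
    using F by (intro card_image inj_onI) (auto simp: doubleton_eq_iff)
  ultimately show "v < ?n \<Longrightarrow> degree (ran_insert s F) v = degree s v + of_bool (v \<in> F)"
    and "degree (ran_insert s F) ?n = card F"
    by auto
qed

lemma face_count_ran_insert:
  assumes faces: "finite (faces s)" "\<forall>G\<in>faces s. G \<subseteq> {..<nverts s}"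
    and F: "F \<in> faces s" "card F = 3"
  shows "v < nverts s \<Longrightarrow> face_count (ran_insert s F) v = face_count s v + of_bool (v \<in> F)"
    and "face_count (ran_insert s F) (nverts s) = 3"
    and "card (faces (ran_insert s F)) = card (faces s) + 2"
proof -
  let ?n = "nverts s"
  let ?sub = "\<lambda>x. insert ?n (F - {x})"
  have n_notin: "?n \<notin> G" if "G \<in> faces s" for G
    using faces that by blast
  have fin: "finite F" using F card.infinite by fastforce
  have inj: "inj_on ?sub A" if "A \<subseteq> F" for A
  proof (rule inj_onI)
    fix x y assume "x \<in> A" "y \<in> A" "?sub x = ?sub y"
    then have "F - {x} = F - {y}"
      using n_notin[OF F(1)] by (metis Diff_iff insert_Diff_if insert_absorb insert_ident)
    then show "x = y" using \<open>x \<in> A\<close> \<open>y \<in> A\<close> that by blast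
  qed
  have disj: "(faces s - {F}) \<inter> ?sub ` F = {}"
    using n_notin by auto
  have split: "{G \<in> faces (ran_insert s F). w \<in> G}
      = ({G \<in> faces s. w \<in> G} - {F}) \<union> ?sub ` {x \<in> F. w \<in> ?sub x}" for w
    by (auto simp: faces_ran_insert)
  have count: "face_count (ran_insert s F) w
      = card ({G \<in> faces s. w \<in> G} - {F}) + card {x \<in> F. w \<in> ?sub x}" for w
    unfolding face_count_def split using faces fin disj
    by (subst card_Un_disjoint) (auto simp: card_image inj)
  show "card (faces (ran_insert s F)) = card (faces s) + 2"
    using faces fin disj F card_gt_0_iff[of "faces s"]
    by (auto simp: faces_ran_insert card_Un_disjoint card_image inj card_Diff_singleton)
  have no_old: "{G \<in> faces s. ?n \<in> G} = {}"
    using n_notin by blast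
  show "face_count (ran_insert s F) ?n = 3"
    unfolding count no_old using F by simp
  assume v: "v < ?n"
  show "face_count (ran_insert s F) v = face_count s v + of_bool (v \<in> F)"
  proof (cases "v \<in> F")
    case True
    then have "{x \<in> F. v \<in> ?sub x} = F - {v}" using v by auto
    moreover have "face_count s v \<ge> 1"
      using faces F True by (auto simp: face_count_def Suc_le_eq card_gt_0_iff)
    ultimately show ?thesis
      unfolding count using True F fin faces by (simp add: face_count_def card_Diff_singleton)
  next
    case False
    then have none: "{x \<in> F. v \<in> ?sub x} = {}" using v by auto
    show ?thesis unfolding count none using False by (simp add: face_count_def)
  qed
qed

definition ran_invariant :: "nat \<Rightarrow> ran_state \<Rightarrow> bool" where
  "ran_invariant t s \<longleftrightarrow> nverts s = t + 3 \<and> card (faces s) = 2 * t + 1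
    \<and> (\<forall>F\<in>faces s. card F = 3 \<and> F \<subseteq> {..<nverts s})
    \<and> finite (edges s) \<and> (\<forall>e\<in>edges s. e \<subseteq> {..<nverts s})
    \<and> (\<forall>v<nverts s. degree s v = face_count s v + of_bool (v < 3))
    \<and> (\<forall>v<nverts s. (if t = 0 then 2 else 3) \<le> degree s v)"

lemma ran_invariantD:
  assumes "ran_invariant t s"
  shows "nverts s = t + 3" and "card (faces s) = 2 * t + 1"
    and "\<And>F. F \<in> faces s \<Longrightarrow> card F = 3" and "\<forall>F\<in>faces s. F \<subseteq> {..<nverts s}"
    and "finite (edges s)" and "\<forall>e\<in>edges s. e \<subseteq> {..<nverts s}"
    and "\<And>v. v < nverts s \<Longrightarrow> degree s v = face_count s v + of_bool (v < 3)"
    and "\<And>v. v < nverts s \<Longrightarrow> (if t = 0 then 2 else 3) \<le> degree s v"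
  using assms unfolding ran_invariant_def by blast+

lemma ran_invariant_faces:
  assumes "ran_invariant t s"
  shows "finite (faces s)" and "faces s \<noteq> {}"
  using ran_invariantD(2)[OF assms] card_gt_0_iff[of "faces s"] by auto

lemma degree_ran_init:
  assumes "v < 3"
  shows "degree ran_init v = 2"
proof -
  consider "v = 0" | "v = 1" | "v = 2"
    using assms by linarith
  then show ?thesis
    unfolding degree_def ran_init_def ran_state.simps Collect_conj_eq Collect_mem_eq Int_insert_left
    by cases (simp_all add: doubleton_eq_iff)
qed

lemma ran_invariant_init: "ran_invariant 0 ran_init"
proof -
  have shape: "nverts ran_init = 3" "faces ran_init = {{0, 1, 2}}"
    "edges ran_init = {{0, 1}, {1, 2}, {0, 2}}"
    by (simp_all add: ran_init_def)
  have "face_count ran_init v = 1" if "v < 3" for v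
  proof -
    have "v \<in> {0, 1, 2}"
      using that by auto
    then have "{F \<in> faces ran_init. v \<in> F} = {{0, 1, 2}}"
      unfolding shape by auto
    then show ?thesis by (simp add: face_count_def)
  qed
  then show ?thesis
    unfolding ran_invariant_def shape using degree_ran_init by (simp add: shape)
qed

lemma ran_invariant_ran_insert:
  assumes inv: "ran_invariant t s" and F: "F \<in> faces s"
  shows "ran_invariant (Suc t) (ran_insert s F)"
proof -
  let ?n = "nverts s" and ?s = "ran_insert s F"
  note I = ran_invariantD[OF inv] and fin = ran_invariant_faces[OF inv]
  have F_sub: "F \<subseteq> {..<?n}" and F_card: "card F = 3"
    using I(3,4) F by auto
  note deg = degree_ran_insert[OF I(5,6) F_sub]
  note fc = face_count_ran_insert[OF fin(1) I(4) F F_card]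
  have new_face: "card (insert ?n (F - {x})) = 3 \<and> insert ?n (F - {x}) \<subseteq> {..<nverts ?s}"
    if "x \<in> F" for x
  proof -
    have "finite F" "?n \<notin> F" using F_sub finite_subset by auto
    then show ?thesis using that F_sub F_card by (auto simp: card_Diff_singleton)
  qed
  have faces_ok: "\<forall>G\<in>faces ?s. card G = 3 \<and> G \<subseteq> {..<nverts ?s}"
    using I(3,4) new_face by (fastforce simp: faces_ran_insert)
  have edges_ok: "finite (edges ?s) \<and> (\<forall>e\<in>edges ?s. e \<subseteq> {..<nverts ?s})"
    using I(5,6) F_sub finite_subset by (fastforce simp: edges_ran_insert)
  have degree_ok: "face_count ?s v + of_bool (v < 3) = degree ?s v
      \<and> 3 \<le> degree ?s v" if "v < nverts ?s" for v
  proof (cases "v = ?n")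
    case True
    then show ?thesis using deg(2) fc(2) F_card I(1) by simp
  next
    case False
    then have v: "v < ?n" using that by simp
    have "v \<in> F" if "t = 0"
    proof -
      have "F = {..<?n}"
        using F_sub F_card I(1) that by (intro card_subset_eq) auto
      then show ?thesis using v by simp
    qed
    then show ?thesis using deg(1)[OF v] fc(1)[OF v] I(7,8)[OF v] by (auto split: if_splits)
  qed
  have "nverts ?s = Suc t + 3" and "card (faces ?s) = 2 * Suc t + 1"
    using I(1,2) fc(3) by simp_all
  then show ?thesis
    unfolding ran_invariant_def using faces_ok edges_ok degree_ok by auto
qed

lemma ran_invariant_ran: "s \<in> set_pmf (ran t) \<Longrightarrow> ran_invariant t s"
proof (induction t arbitrary: s)
  case 0
  then show ?case using ran_invariant_init by simp
next
  case (Suc t)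
  then obtain s' F where "ran_invariant t s'" "F \<in> faces s'" "s = ran_insert s' F"
    using ran_invariant_faces by (fastforce simp: ran_step_def)
  then show ?case using ran_invariant_ran_insert by simp
qed

lemma finite_set_pmf_ran_step:
  "ran_invariant t s \<Longrightarrow> finite (set_pmf (ran_step s))"
  using ran_invariant_faces by (simp add: ran_step_def)

lemma finite_set_pmf_ran: "finite (set_pmf (ran t))"
  by (induction t) (auto intro: finite_set_pmf_ran_step ran_invariant_ran)

lemma Z3_ran_insert:
  assumes inv: "ran_invariant t s" and "0 < t" and F: "F \<in> faces s"
  shows "Z 3 (ran_insert s F) + card {v \<in> F. degree s v = 3} = Z 3 s + 1"
proof -
  let ?n = "nverts s"
  define A where "A = {v. v < ?n \<and> degree s v = 3}"
  note I = ran_invariantD[OF inv]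
  have F_sub: "F \<subseteq> {..<?n}" using I(4) F by auto
  note deg = degree_ran_insert[OF I(5,6) F_sub]
  have "{v. v < nverts (ran_insert s F) \<and> degree (ran_insert s F) v = 3} = insert ?n (A - F)"
  proof (rule set_eqI)
    fix v
    show "v \<in> {v. v < nverts (ran_insert s F) \<and> degree (ran_insert s F) v = 3}
        \<longleftrightarrow> v \<in> insert ?n (A - F)"
    proof (cases "v < ?n")
      case True
      then show ?thesis
        using deg(1)[OF True] I(8)[OF True] \<open>0 < t\<close> unfolding A_def by auto
    next
      case False
      then show ?thesis using deg(2) I(3)[OF F] unfolding A_def by auto
    qed
  qed
  moreover have "A \<inter> F = {v \<in> F. degree s v = 3}"
    using F_sub unfolding A_def by auto
  moreover have "finite A" unfolding A_def by simp
  ultimately show ?thesis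
    unfolding Z_def A_def[symmetric] using card_Int_Diff[of A F] by (simp add: A_def)
qed

lemma sum_card_incidences_swap:
  assumes "finite \<F>" "finite V" "\<forall>F\<in>\<F>. F \<subseteq> V"
  shows "(\<Sum>F\<in>\<F>. card {v \<in> F. P v}) = (\<Sum>v\<in>{v \<in> V. P v}. card {F \<in> \<F>. v \<in> F})"
proof -
  have "(SIGMA v:{v \<in> V. P v}. {F \<in> \<F>. v \<in> F}) = prod.swap ` (SIGMA F:\<F>. {v \<in> F. P v})"
    using assms(3) by force
  then have "card (SIGMA v:{v \<in> V. P v}. {F \<in> \<F>. v \<in> F}) = card (SIGMA F:\<F>. {v \<in> F. P v})"
    by (simp add: card_image)
  moreover have "\<forall>F\<in>\<F>. finite {v \<in> F. P v}"
  proof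
    fix F assume "F \<in> \<F>"
    then have "finite F" using assms(2,3) finite_subset by blast
    then show "finite {v \<in> F. P v}" by simp
  qed
  ultimately show ?thesis
    using assms by simp
qed

definition degree3_corners :: "ran_state \<Rightarrow> nat" where
  "degree3_corners s = (\<Sum>F\<in>faces s. card {v \<in> F. degree s v = 3})"

lemma degree3_corners_eq:
  assumes inv: "ran_invariant t s"
  shows "degree3_corners s + card {v. v < 3 \<and> degree s v = 3} = 3 * Z 3 s"
proof -
  define A where "A = {v. v < nverts s \<and> degree s v = 3}"
  note I = ran_invariantD[OF inv]
  have "finite A" unfolding A_def by simp
  have "A = {v \<in> {..<nverts s}. degree s v = 3}"
    unfolding A_def by auto
  then have "degree3_corners s = (\<Sum>v\<in>A. face_count s v)"
    unfolding degree3_corners_def face_count_def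
    using I(4) ran_invariant_faces[OF inv] by (simp only:) (intro sum_card_incidences_swap, auto)
  also have "\<dots> = (\<Sum>v\<in>A. 3 - of_bool (v < 3) :: nat)"
    using I(7) unfolding A_def by (intro sum.cong) auto
  finally have "degree3_corners s + (\<Sum>v\<in>A. of_bool (v < 3)) = (\<Sum>v\<in>A. 3)"
    by (simp add: sum.distrib[symmetric])
  moreover have "A \<inter> {v. v < 3} = {v. v < 3 \<and> degree s v = 3}"
    using I(1) unfolding A_def by auto
  ultimately show ?thesis
    using \<open>finite A\<close> unfolding Z_def A_def[symmetric] by simp
qed

lemma expectation_Z3_ran_step:
  assumes inv: "ran_invariant t s" and "0 < t"
  shows "measure_pmf.expectation (ran_step s) (\<lambda>s'. real (Z 3 s'))
    = real (Z 3 s) + 1 - real (degree3_corners s) / (2 * real t + 1)"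
proof -
  note fin = ran_invariant_faces[OF inv]
  have "measure_pmf.expectation (ran_step s) (\<lambda>s'. real (Z 3 s'))
      = (\<Sum>F\<in>faces s. real (Z 3 (ran_insert s F))) / real (card (faces s))"
    unfolding ran_step_def using fin by (simp add: integral_pmf_of_set)
  also have "(\<Sum>F\<in>faces s. real (Z 3 (ran_insert s F)))
      = (\<Sum>F\<in>faces s. real (Z 3 s) + 1 - real (card {v \<in> F. degree s v = 3}))"
    using Z3_ran_insert[OF inv \<open>0 < t\<close>]
    by (intro sum.cong) (auto simp: algebra_simps simp flip: of_nat_add)
  also have "\<dots> = real (card (faces s)) * (real (Z 3 s) + 1) - real (degree3_corners s)"
    by (simp add: degree3_corners_def sum_subtractf)
  finally show ?thesis
    using ran_invariantD(2)[OF inv] by (simp add: field_simps)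
qed

lemma expectation_Z3_ran_step_bounds:
  assumes inv: "ran_invariant t s" and "0 < t"
  defines "q \<equiv> 3 / (2 * real t + 1)"
  shows "(1 - q) * real (Z 3 s) + 1 \<le> measure_pmf.expectation (ran_step s) (\<lambda>s'. real (Z 3 s'))"
    and "measure_pmf.expectation (ran_step s) (\<lambda>s'. real (Z 3 s')) \<le> (1 - q) * real (Z 3 s) + 1 + q"
proof -
  have "card {v. v < 3 \<and> degree s v = 3} \<le> card {..<3::nat}"
    by (rule card_mono) auto
  moreover have "real (degree3_corners s) + real (card {v. v < 3 \<and> degree s v = 3}) = 3 * real (Z 3 s)"
    using arg_cong[OF degree3_corners_eq[OF inv], of real] by simp
  ultimately have "3 * real (Z 3 s) - 3 \<le> real (degree3_corners s)"
    and "real (degree3_corners s) \<le> 3 * real (Z 3 s)"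
    by simp_all
  then have "(3 * real (Z 3 s) - 3) / (2 * real t + 1) \<le> real (degree3_corners s) / (2 * real t + 1)"
    and "real (degree3_corners s) / (2 * real t + 1) \<le> 3 * real (Z 3 s) / (2 * real t + 1)"
    by (simp_all add: divide_right_mono)
  then show "(1 - q) * real (Z 3 s) + 1 \<le> measure_pmf.expectation (ran_step s) (\<lambda>s'. real (Z 3 s'))"
    and "measure_pmf.expectation (ran_step s) (\<lambda>s'. real (Z 3 s')) \<le> (1 - q) * real (Z 3 s) + 1 + q"
    unfolding expectation_Z3_ran_step[OF assms(1,2)] q_def
    by (simp_all add: algebra_simps diff_divide_distrib)
qed

lemma expectation_bind_pmf_finite:
  fixes h :: "'b \<Rightarrow> real"
  assumes "finite (set_pmf p)" and "\<And>x. x \<in> set_pmf p \<Longrightarrow> finite (set_pmf (f x))"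
  shows "measure_pmf.expectation (p \<bind> f) h
    = measure_pmf.expectation p (\<lambda>x. measure_pmf.expectation (f x) h)"
  using assms by (simp add: pmf_expectation_bind[of "set_pmf p"] integral_measure_pmf[of "set_pmf p"])

lemma N3_Suc_bounds:
  assumes "1 \<le> t"
  defines "q \<equiv> 3 / (2 * real t + 1)"
  shows "(1 - q) * N3 t + 1 \<le> N3 (Suc t)" and "N3 (Suc t) \<le> (1 - q) * N3 t + 1 + q"
proof -
  let ?E = "\<lambda>s. measure_pmf.expectation (ran_step s) (\<lambda>s'. real (Z 3 s'))"
  have N3_Suc: "N3 (Suc t) = measure_pmf.expectation (ran t) ?E"
    unfolding N3_def ran.simps
    by (rule expectation_bind_pmf_finite)
      (auto intro: finite_set_pmf_ran finite_set_pmf_ran_step ran_invariant_ran)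
  have integrable: "integrable (measure_pmf (ran t)) g" for g :: "ran_state \<Rightarrow> real"
    by (rule integrable_measure_pmf_finite[OF finite_set_pmf_ran])
  have "\<forall>s\<in>set_pmf (ran t). (1 - q) * real (Z 3 s) + 1 \<le> ?E s \<and> ?E s \<le> (1 - q) * real (Z 3 s) + 1 + q"
    using expectation_Z3_ran_step_bounds ran_invariant_ran assms by (auto simp: q_def)
  then have "measure_pmf.expectation (ran t) (\<lambda>s. (1 - q) * real (Z 3 s) + 1) \<le> N3 (Suc t)"
    and "N3 (Suc t) \<le> measure_pmf.expectation (ran t) (\<lambda>s. (1 - q) * real (Z 3 s) + 1 + q)"
    unfolding N3_Suc by (auto intro!: integral_mono_AE integrable simp: AE_measure_pmf_iff)
  then show "(1 - q) * N3 t + 1 \<le> N3 (Suc t)" and "N3 (Suc t) \<le> (1 - q) * N3 t + 1 + q"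
    by (simp_all add: N3_def integrable)
qed

lemma N3_1: "N3 1 = 4"
proof -
  let ?F = "{0, 1, 2} :: nat set"
  let ?s = "ran_insert ran_init ?F"
  note I = ran_invariantD[OF ran_invariant_init]
  have faces_init: "faces ran_init = {?F}" by (simp add: ran_init_def)
  then have "ran 1 = return_pmf ?s"
    by (simp add: bind_return_pmf ran_step_def pmf_of_set_singleton)
  moreover have "{v. v < nverts ?s \<and> degree ?s v = 3} = {..<4}"
    using degree_ran_insert[OF I(5,6)] degree_ran_init I(1,4) faces_init
    by (auto simp: less_Suc_eq numeral_eq_Suc)
  ultimately show ?thesis
    by (simp add: N3_def Z_def)
qed

lemma N3_bounds:
  assumes "1 \<le> t"
  shows "2/5 * real t \<le> N3 t \<and> N3 t \<le> 2/5 * real t + 3.6"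
  using assms
proof (induction t rule: dec_induct)
  case base
  show ?case using N3_1 by simp
next
  case (step t)
  define q where "q = 3 / (2 * real t + 1)"
  have "2 * real t + 1 \<noteq> 0" by linarith
  then have "q * (2 * real t + 1) = 3"
    unfolding q_def by (simp add: field_simps)
  then have q: "2 * (q * real t) + q = 3" by (simp add: algebra_simps)
  have "0 \<le> q" and "q \<le> 1"
    using step(1) by (simp_all add: q_def)
  then have "(1 - q) * (2/5 * real t) \<le> (1 - q) * N3 t"
    and "(1 - q) * N3 t \<le> (1 - q) * (2/5 * real t + 3.6)"
    using step(3) by (simp_all only: mult_left_mono diff_ge_0_iff_ge)
  moreover have "2/5 * real (Suc t) \<le> (1 - q) * (2/5 * real t) + 1"
    and "(1 - q) * (2/5 * real t + 3.6) + 1 + q \<le> 2/5 * real (Suc t) + 3.6"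
    using q \<open>0 \<le> q\<close> by (simp_all add: field_simps)
  ultimately show ?case
    using N3_Suc_bounds[OF step(1), folded q_def] by linarith
qed

theorem mainTheorem2:
  fixes t :: nat
  assumes "t \<ge> 1"
  shows "\<bar>N3 t - (2/5) * real t\<bar> \<le> 3.6"
  using N3_bounds[OF assms] by (simp add: abs_le_iff)

end
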